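(* Let $(X,d)\in\mathfrak U$ (with $X\cap\operatorname{Sp}(X)=\varnothing$) and let $u,v,w$ be distinct internal nodes of the representing tree $T_X$ with labels $r_u,r_v,r_w\in\operatorname{Sp}(X)$. Then $v$ and $w$ are children of $u$ if and only if $$B_{r_u}=B_{r_v}\cup B_{r_w},$$ where $B_{r_u},B_{r_v},B_{r_w}$ are the balls in $\mathbf B_X$ of radii $r_u,r_v,r_w$ respectively.
   Context: $\operatorname{Sp}(X)=\{d(x,y):x\neq y\}$, $\operatorname{diam}X=\max d(x,y)$; $\mathfrak U$ is the class of finite ultrametric spaces $X$ with $|\operatorname{Sp}(X)|=|X|-1$. For $t\in X$, $B_r(t)=\{x:d(x,t)\le r\}$, $\operatorname{Sp}_t(X)=\{d(x,t):x\neq t\}$, and $\mathbf B_X=\{B_r(t):t\in X,\ r\in\operatorname{Sp}_t(X)\}$; for $X\in\mathfrak U$ and each $r\in\operatorname{Sp}(X)$ there is exactly one ball of radius $r$ in $\mathbf B_X$. The representing tree $T_X$ is the labelled rooted tree defined recursively: for $X=\{x\}$ it is a single node labelled $x$; for $|X|\ge2$ the root is labelled $\operatorname{diam}X$ and has one child for each class $X_i$ of the equivalence relation $x\sim y\iff d(x,y)<\operatorname{diam}X$, that child being labelled $x$ if $X_i=\{x\}$ (a leaf) and otherwise labelled $\operatorname{diam}X_i$ (an internal node) and carrying the recursively constructed tree for $X_i$. Children of a node are the adjacent nodes on the next level (farther from the root). *)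

theory Defs
  imports Complex_Main
begin

definition ultrametric :: "'a set \<Rightarrow> ('a \<Rightarrow> 'a \<Rightarrow> real) \<Rightarrow> bool" where
  "ultrametric X d \<longleftrightarrow>
     (\<forall>x\<in>X. \<forall>y\<in>X. d x y \<ge> 0 \<and> (d x y = 0 \<longleftrightarrow> x = y) \<and> d x y = d y x) \<and>
     (\<forall>x\<in>X. \<forall>y\<in>X. \<forall>z\<in>X. d x y \<le> max (d x z) (d z y))"

definition Sp :: "'a set \<Rightarrow> ('a \<Rightarrow> 'a \<Rightarrow> real) \<Rightarrow> real set" where
  "Sp X d = {d x y | x y. x \<in> X \<and> y \<in> X \<and> x \<noteq> y}"

definition Sp_at :: "'a set \<Rightarrow> ('a \<Rightarrow> 'a \<Rightarrow> real) \<Rightarrow> 'a \<Rightarrow> real set" where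
  "Sp_at X d t = {d x t | x. x \<in> X \<and> x \<noteq> t}"

definition diam :: "'a set \<Rightarrow> ('a \<Rightarrow> 'a \<Rightarrow> real) \<Rightarrow> real" where
  "diam A d = Max (insert 0 {d x y | x y. x \<in> A \<and> y \<in> A})"

definition classU :: "'a set \<Rightarrow> ('a \<Rightarrow> 'a \<Rightarrow> real) \<Rightarrow> bool" where
  "classU X d \<longleftrightarrow> finite X \<and> X \<noteq> {} \<and> ultrametric X d \<and> card (Sp X d) = card X - 1"

definition cball_in :: "'a set \<Rightarrow> ('a \<Rightarrow> 'a \<Rightarrow> real) \<Rightarrow> 'a \<Rightarrow> real \<Rightarrow> 'a set" where
  "cball_in X d t r = {x \<in> X. d x t \<le> r}"

definition balls :: "'a set \<Rightarrow> ('a \<Rightarrow> 'a \<Rightarrow> real) \<Rightarrow> 'a set set" where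
  "balls X d = {cball_in X d t r | t r. t \<in> X \<and> r \<in> Sp_at X d t}"

text \<open>The (unique, for X in U) ball of \<open>B_X\<close> of radius r.\<close>
definition ball_of_radius :: "'a set \<Rightarrow> ('a \<Rightarrow> 'a \<Rightarrow> real) \<Rightarrow> real \<Rightarrow> 'a set" where
  "ball_of_radius X d r = (THE B. \<exists>t\<in>X. r \<in> Sp_at X d t \<and> B = cball_in X d t r)"

text \<open>A node of T_X is identified with the subset of X
  carried by the subtree rooted at it (X for the root, the classes X_i for the
  children, recursively). A node A is a leaf (labelled by its unique point) iff
  A is a singleton; otherwise it is an internal node labelled diam A.\<close>
definition rt_classes :: "('a \<Rightarrow> 'a \<Rightarrow> real) \<Rightarrow> 'a set \<Rightarrow> 'a set set" where
  "rt_classes d A = A // {(x, y). x \<in> A \<and> y \<in> A \<and> d x y < diam A d}"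

inductive_set rt_nodes :: "'a set \<Rightarrow> ('a \<Rightarrow> 'a \<Rightarrow> real) \<Rightarrow> 'a set set"
  for X d where
  root: "X \<in> rt_nodes X d"
| child: "A \<in> rt_nodes X d \<Longrightarrow> 2 \<le> card A \<Longrightarrow> C \<in> rt_classes d A \<Longrightarrow> C \<in> rt_nodes X d"

definition rt_internal :: "'a set \<Rightarrow> ('a \<Rightarrow> 'a \<Rightarrow> real) \<Rightarrow> 'a set \<Rightarrow> bool" where
  "rt_internal X d A \<longleftrightarrow> A \<in> rt_nodes X d \<and> 2 \<le> card A"

definition rt_label :: "('a \<Rightarrow> 'a \<Rightarrow> real) \<Rightarrow> 'a set \<Rightarrow> real" where
  "rt_label d A = diam A d"

definition rt_child :: "'a set \<Rightarrow> ('a \<Rightarrow> 'a \<Rightarrow> real) \<Rightarrow> 'a set \<Rightarrow> 'a set \<Rightarrow> bool" where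
  "rt_child X d A C \<longleftrightarrow> rt_internal X d A \<and> C \<in> rt_classes d A"

end

theory Submission imports Defs begin

text \<open>Every node A of the representing tree is the ball of radius diam A about each of its
  points, because all points outside A are farther than diam A from A. For a finite
  ultrametric space the deficiency |A| - 1 - |Sp A| is nonnegative, and since
  Sp A lies in {diam A} together with the spectra of the children of A, the deficiency of A
  bounds the deficiencies of the children plus (number of children - 2) plus the overlap of
  their spectra. In the class U the deficiency of the root vanishes, so every internal node
  has exactly two children and their spectra are disjoint. Disjointness shows that the label
  of an internal node u occurs in Sp_t(X) only for t in u, so u is the unique ball of
  radius diam u in B_X. The identity of balls then reads u = v \<union> w, which, for a node
  split into exactly two disjoint classes, says that v and w are its children.\<close>

lemma finite_dist_set: "finite A \<Longrightarrow> finite {d x y | x y. x \<in> A \<and> y \<in> A}"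
  by (rule finite_image_set2) simp_all

lemma finite_Sp: "finite A \<Longrightarrow> finite (Sp A d)"
  unfolding Sp_def by (rule finite_subset[OF _ finite_dist_set]) auto

lemma Sp_mono: "B \<subseteq> A \<Longrightarrow> Sp B d \<subseteq> Sp A d"
  unfolding Sp_def by blast

lemma diam_ge: "finite A \<Longrightarrow> x \<in> A \<Longrightarrow> y \<in> A \<Longrightarrow> d x y \<le> diam A d"
  unfolding diam_def by (rule Max_ge) (auto simp: finite_dist_set)

lemma diam_nonneg: "finite A \<Longrightarrow> 0 \<le> diam A d"
  unfolding diam_def by (rule Max_ge) (auto simp: finite_dist_set)

lemma diam_less:
  "finite A \<Longrightarrow> 0 < c \<Longrightarrow> (\<And>x y. x \<in> A \<Longrightarrow> y \<in> A \<Longrightarrow> d x y < c) \<Longrightarrow> diam A d < c"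
  unfolding diam_def by (subst Max_less_iff) (auto simp: finite_dist_set)

lemma diam_le:
  "finite A \<Longrightarrow> 0 \<le> c \<Longrightarrow> (\<And>x y. x \<in> A \<Longrightarrow> y \<in> A \<Longrightarrow> d x y \<le> c) \<Longrightarrow> diam A d \<le> c"
  unfolding diam_def by (subst Max_le_iff) (auto simp: finite_dist_set)

lemma diam_mono: "finite A \<Longrightarrow> B \<subseteq> A \<Longrightarrow> diam B d \<le> diam A d"
  by (rule diam_le) (auto intro: finite_subset diam_nonneg diam_ge)

lemma diam_attained:
  assumes "finite A" "0 < diam A d"
  shows "\<exists>x\<in>A. \<exists>y\<in>A. d x y = diam A d"
proof -
  have "diam A d \<in> insert 0 {d x y | x y. x \<in> A \<and> y \<in> A}"
    unfolding diam_def by (rule Max_in) (auto simp: finite_dist_set assms(1))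
  with assms(2) show ?thesis by force
qed

locale finite_ultrametric =
  fixes X :: "'a set" and d :: "'a \<Rightarrow> 'a \<Rightarrow> real"
  assumes ultrametric: "ultrametric X d" and finite_X: "finite X"
begin

lemma dist_eq_0_iff: "x \<in> X \<Longrightarrow> y \<in> X \<Longrightarrow> d x y = 0 \<longleftrightarrow> x = y"
  using ultrametric unfolding ultrametric_def by blast

lemma dist_commute: "x \<in> X \<Longrightarrow> y \<in> X \<Longrightarrow> d x y = d y x"
  using ultrametric unfolding ultrametric_def by blast

lemma dist_ultra: "x \<in> X \<Longrightarrow> y \<in> X \<Longrightarrow> z \<in> X \<Longrightarrow> d x z \<le> max (d x y) (d y z)"
  using ultrametric unfolding ultrametric_def by blast

lemma dist_nonneg: "x \<in> X \<Longrightarrow> y \<in> X \<Longrightarrow> 0 \<le> d x y"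
  using ultrametric unfolding ultrametric_def by blast

lemma dist_pos: "x \<in> X \<Longrightarrow> y \<in> X \<Longrightarrow> x \<noteq> y \<Longrightarrow> 0 < d x y"
  using dist_nonneg dist_eq_0_iff by (metis less_eq_real_def)

lemma finite_subset_X: "A \<subseteq> X \<Longrightarrow> finite A"
  using finite_subset finite_X by blast

lemma diam_pos:
  assumes "A \<subseteq> X" "2 \<le> card A"
  shows "0 < diam A d"
proof -
  have "\<not> card A \<le> Suc 0" using assms(2) by simp
  then obtain a b where "a \<in> A" "b \<in> A" "a \<noteq> b"
    using card_le_Suc0_iff_eq[OF finite_subset_X[OF assms(1)]] by blast
  with assms(1) have "0 < d a b" using dist_pos by blast
  also have "d a b \<le> diam A d"
    using diam_ge[OF finite_subset_X[OF assms(1)] \<open>a \<in> A\<close> \<open>b \<in> A\<close>] .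
  finally show ?thesis .
qed

lemma diam_attained_distinct:
  assumes "A \<subseteq> X" "2 \<le> card A"
  obtains a b where "a \<in> A" "b \<in> A" "a \<noteq> b" "d a b = diam A d"
proof -
  obtain a b where ab: "a \<in> A" "b \<in> A" "d a b = diam A d"
    using diam_attained[OF finite_subset_X[OF assms(1)] diam_pos[OF assms]] by blast
  moreover have "a \<noteq> b"
  proof
    assume "a = b"
    then have "d a b = 0" using dist_eq_0_iff ab(1) assms(1) by blast
    then show False using ab(3) diam_pos[OF assms] by simp
  qed
  ultimately show ?thesis using that by blast
qed

lemma diam_in_Sp: "A \<subseteq> X \<Longrightarrow> 2 \<le> card A \<Longrightarrow> diam A d \<in> Sp A d"
  unfolding Sp_def by (erule diam_attained_distinct) force+

definition rt_rel :: "'a set \<Rightarrow> ('a \<times> 'a) set" where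
  "rt_rel A = {(x, y). x \<in> A \<and> y \<in> A \<and> d x y < diam A d}"

definition deficiency :: "'a set \<Rightarrow> int" where
  "deficiency A = int (card A) - 1 - int (card (Sp A d))"

context
  fixes A :: "'a set"
  assumes A_subset: "A \<subseteq> X" and card_A: "2 \<le> card A"
begin

lemma equiv_rt_rel: "equiv A (rt_rel A)"
proof (rule equivI)
  show "rt_rel A \<subseteq> A \<times> A" unfolding rt_rel_def by auto
  have "d x x = 0" if "x \<in> A" for x
    using dist_eq_0_iff A_subset that by blast
  then show "refl_on A (rt_rel A)"
    using diam_pos[OF A_subset card_A] unfolding refl_on_def rt_rel_def by auto
  show "sym (rt_rel A)"
    unfolding sym_def rt_rel_def using A_subset by (clarsimp, metis dist_commute subsetD)
  show "trans (rt_rel A)"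
  proof (rule transI)
    fix x y z assume "(x, y) \<in> rt_rel A" "(y, z) \<in> rt_rel A"
    then have xyz: "x \<in> A" "y \<in> A" "z \<in> A" "d x y < diam A d" "d y z < diam A d"
      unfolding rt_rel_def by auto
    moreover have "d x z \<le> max (d x y) (d y z)" using dist_ultra A_subset xyz(1-3) by blast
    ultimately show "(x, z) \<in> rt_rel A" unfolding rt_rel_def by auto
  qed
qed

lemma rt_classes_eq: "rt_classes d A = A // rt_rel A"
  unfolding rt_classes_def rt_rel_def by simp

lemma finite_rt_classes: "finite (rt_classes d A)"
  unfolding rt_classes_eq
  using finite_quotient[OF finite_subset_X[OF A_subset]] equiv_rt_rel equiv_type by blast

lemma Union_rt_classes: "\<Union>(rt_classes d A) = A"
  unfolding rt_classes_eq using Union_quotient[OF equiv_rt_rel] .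

lemma rt_class_subset: "C \<in> rt_classes d A \<Longrightarrow> C \<subseteq> A"
  using Union_rt_classes by blast

lemma finite_rt_class: "C \<in> rt_classes d A \<Longrightarrow> finite C"
  using rt_class_subset A_subset finite_subset_X by blast

lemma rt_class_nonempty: "C \<in> rt_classes d A \<Longrightarrow> C \<noteq> {}"
  unfolding rt_classes_eq using in_quotient_imp_non_empty[OF equiv_rt_rel] by blast

lemma rt_classes_disjoint:
  "C1 \<in> rt_classes d A \<Longrightarrow> C2 \<in> rt_classes d A \<Longrightarrow> C1 \<noteq> C2 \<Longrightarrow> C1 \<inter> C2 = {}"
  unfolding rt_classes_eq using quotient_disj[OF equiv_rt_rel] by blast

lemma ex_rt_class: "x \<in> A \<Longrightarrow> \<exists>C\<in>rt_classes d A. x \<in> C"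
  using Union_rt_classes by blast

lemma mem_rt_class_iff:
  assumes "C \<in> rt_classes d A" "x \<in> C" "y \<in> A"
  shows "y \<in> C \<longleftrightarrow> d x y < diam A d"
proof -
  obtain z where "C = rt_rel A `` {z}"
    using assms(1) unfolding rt_classes_eq by (rule quotientE)
  with assms(2) have "C = rt_rel A `` {x}"
    using equiv_class_eq[OF equiv_rt_rel] by blast
  then show ?thesis using assms(2,3) rt_class_subset[OF assms(1)] unfolding rt_rel_def by auto
qed

lemma diam_rt_class_less:
  assumes "C \<in> rt_classes d A"
  shows "diam C d < diam A d"
proof (rule diam_less)
  show "finite C" using finite_rt_class assms .
  show "0 < diam A d" using diam_pos A_subset card_A .
  fix x y assume "x \<in> C" "y \<in> C"
  then show "d x y < diam A d" using mem_rt_class_iff[OF assms] rt_class_subset[OF assms] by blast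
qed

lemma card_rt_class_less:
  assumes "C \<in> rt_classes d A"
  shows "card C < card A"
proof (rule psubset_card_mono)
  show "finite A" using finite_subset_X A_subset .
  have "C \<noteq> A" using diam_rt_class_less[OF assms] by auto
  then show "C \<subset> A" using rt_class_subset[OF assms] by blast
qed

lemma two_le_card_rt_classes: "2 \<le> card (rt_classes d A)"
proof -
  obtain a b where ab: "a \<in> A" "b \<in> A" "a \<noteq> b" "d a b = diam A d"
    by (rule diam_attained_distinct[OF A_subset card_A])
  obtain Ca Cb where C: "Ca \<in> rt_classes d A" "a \<in> Ca" "Cb \<in> rt_classes d A" "b \<in> Cb"
    using ex_rt_class ab(1,2) by blast
  have "b \<notin> Ca" using mem_rt_class_iff[OF C(1,2) ab(2)] ab(4) by simp
  then have "Ca \<noteq> Cb" using C by blast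
  then have "card {Ca, Cb} = 2" by simp
  moreover have "card {Ca, Cb} \<le> card (rt_classes d A)"
    using C by (intro card_mono finite_rt_classes) auto
  ultimately show ?thesis by simp
qed

lemma card_eq_sum_card_rt_classes: "card A = (\<Sum>C\<in>rt_classes d A. card C)"
proof -
  have "card (\<Union>(rt_classes d A)) = (\<Sum>C\<in>rt_classes d A. card C)"
    using finite_rt_classes rt_classes_disjoint finite_rt_class
    by (intro card_Union_disjoint) (auto simp: pairwise_def disjnt_def)
  then show ?thesis using Union_rt_classes by simp
qed

lemma Sp_subset_rt_classes: "Sp A d \<subseteq> insert (diam A d) (\<Union>C\<in>rt_classes d A. Sp C d)"
proof
  fix r assume "r \<in> Sp A d"
  then obtain x y where xy: "x \<in> A" "y \<in> A" "x \<noteq> y" "r = d x y" unfolding Sp_def by auto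
  show "r \<in> insert (diam A d) (\<Union>C\<in>rt_classes d A. Sp C d)"
  proof (cases "d x y < diam A d")
    case True
    obtain C where C: "C \<in> rt_classes d A" "x \<in> C" using ex_rt_class xy(1) by blast
    then have "y \<in> C" using mem_rt_class_iff xy(2) True by blast
    then have "r \<in> Sp C d" using C xy unfolding Sp_def by auto
    then show ?thesis using C by blast
  next
    case False
    have "d x y \<le> diam A d" using diam_ge[OF finite_subset_X[OF A_subset] xy(1,2)] .
    then show ?thesis using False xy(4) by simp
  qed
qed

lemma deficiency_split:
  "(\<Sum>C\<in>rt_classes d A. deficiency C) + int (card (rt_classes d A)) - 2
    + ((\<Sum>C\<in>rt_classes d A. int (card (Sp C d))) - int (card (\<Union>C\<in>rt_classes d A. Sp C d)))
   \<le> deficiency A"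
proof -
  let ?K = "rt_classes d A"
  have "finite (\<Union>C\<in>?K. Sp C d)" by (simp add: finite_rt_classes finite_rt_class finite_Sp)
  then have "card (Sp A d) \<le> card (insert (diam A d) (\<Union>C\<in>?K. Sp C d))"
    using Sp_subset_rt_classes by (intro card_mono) auto
  also have "\<dots> \<le> Suc (card (\<Union>C\<in>?K. Sp C d))" by (simp add: card_insert_le_m1 card_insert_if)
  finally have "card (Sp A d) \<le> Suc (card (\<Union>C\<in>?K. Sp C d))" .
  moreover have "int (card A) = (\<Sum>C\<in>?K. int (card C))"
    using card_eq_sum_card_rt_classes by simp
  moreover have "(\<Sum>C\<in>?K. deficiency C)
      = (\<Sum>C\<in>?K. int (card C)) - int (card ?K) - (\<Sum>C\<in>?K. int (card (Sp C d)))"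
    unfolding deficiency_def by (simp add: sum_subtractf)
  ultimately show ?thesis unfolding deficiency_def by linarith
qed

lemma card_UN_Sp_rt_classes_le:
  "int (card (\<Union>C\<in>rt_classes d A. Sp C d)) \<le> (\<Sum>C\<in>rt_classes d A. int (card (Sp C d)))"
  using card_UN_le[OF finite_rt_classes, of "\<lambda>C. Sp C d"] by (simp flip: of_nat_sum)

lemma deficiency_split_ge:
  "(\<Sum>C\<in>rt_classes d A. deficiency C) + int (card (rt_classes d A)) - 2 \<le> deficiency A"
  using deficiency_split card_UN_Sp_rt_classes_le by linarith

end

lemma deficiency_nonneg: "A \<subseteq> X \<Longrightarrow> A \<noteq> {} \<Longrightarrow> 0 \<le> deficiency A"
proof (induction "card A" arbitrary: A rule: less_induct)
  case less
  show ?case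
  proof (cases "2 \<le> card A")
    case False
    have "card A \<noteq> 0" using less.prems finite_subset_X by simp
    with False have "card A = 1" by linarith
    then obtain a where "A = {a}" by (auto simp: card_1_singleton_iff)
    then show ?thesis by (simp add: deficiency_def Sp_def)
  next
    case True
    have "0 \<le> deficiency C" if C: "C \<in> rt_classes d A" for C
      using less.hyps[OF card_rt_class_less[OF less.prems(1) True C]
          order_trans[OF rt_class_subset[OF less.prems(1) True C] less.prems(1)]
          rt_class_nonempty[OF less.prems(1) True C]] .
    then have "0 \<le> (\<Sum>C\<in>rt_classes d A. deficiency C)" by (rule sum_nonneg)
    then show ?thesis
      using deficiency_split_ge[OF less.prems(1) True] two_le_card_rt_classes[OF less.prems(1) True]
      by linarith
  qed
qed

lemma deficiency_rt_class_nonneg: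
  assumes "A \<subseteq> X" "2 \<le> card A" "C \<in> rt_classes d A"
  shows "0 \<le> deficiency C"
  using deficiency_nonneg[OF order_trans[OF rt_class_subset[OF assms] assms(1)]
      rt_class_nonempty[OF assms]] .

lemma sum_deficiency_rt_classes_nonneg:
  "A \<subseteq> X \<Longrightarrow> 2 \<le> card A \<Longrightarrow> 0 \<le> (\<Sum>C\<in>rt_classes d A. deficiency C)"
  by (rule sum_nonneg) (rule deficiency_rt_class_nonneg)

lemma deficiency_rt_class_le:
  assumes "A \<subseteq> X" "2 \<le> card A" "C \<in> rt_classes d A"
  shows "deficiency C \<le> deficiency A"
proof -
  have "deficiency C \<le> (\<Sum>C\<in>rt_classes d A. deficiency C)"
    using member_le_sum[OF assms(3), of deficiency] deficiency_rt_class_nonneg[OF assms(1,2)]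
      finite_rt_classes[OF assms(1,2)] by blast
  then show ?thesis
    using deficiency_split_ge[OF assms(1,2)] two_le_card_rt_classes[OF assms(1,2)] by linarith
qed

lemma rt_nodes_subset: "A \<in> rt_nodes X d \<Longrightarrow> A \<subseteq> X"
proof (induction rule: rt_nodes.induct)
  case (child A C)
  then show ?case using rt_class_subset[OF child.IH child.hyps(2,3)] by blast
qed simp

lemma rt_node_separated:
  "A \<in> rt_nodes X d \<Longrightarrow> t \<in> A \<Longrightarrow> x \<in> X - A \<Longrightarrow> diam A d < d x t"
proof (induction arbitrary: t x rule: rt_nodes.induct)
  case root
  then show ?case by simp
next
  case (child A C)
  have A: "A \<subseteq> X" using rt_nodes_subset child.hyps(1) .
  have "t \<in> A" using rt_class_subset[OF A child.hyps(2,3)] child.prems(1) by blast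
  have "diam A d \<le> d x t"
  proof (cases "x \<in> A")
    case True
    then have "\<not> d t x < diam A d"
      using mem_rt_class_iff[OF A child.hyps(2,3) child.prems(1)] child.prems(2) by blast
    moreover have "d t x = d x t" using dist_commute A \<open>t \<in> A\<close> child.prems(2) by blast
    ultimately show ?thesis by linarith
  next
    case False
    then have "x \<in> X - A" using child.prems(2) by blast
    then show ?thesis using child.IH[OF \<open>t \<in> A\<close>] by fastforce
  qed
  then show ?case using diam_rt_class_less[OF A child.hyps(2,3)] by linarith
qed

lemma cball_rt_node:
  assumes "A \<in> rt_nodes X d" "t \<in> A"
  shows "cball_in X d t (diam A d) = A"
proof -
  have "A \<subseteq> X" using rt_nodes_subset assms(1) .
  moreover have "x \<in> A" if "x \<in> X" "d x t \<le> diam A d" for x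
    using rt_node_separated[OF assms, of x] that by (auto simp: not_less[symmetric])
  moreover have "d x t \<le> diam A d" if "x \<in> A" for x
    using diam_ge[OF finite_subset_X[OF \<open>A \<subseteq> X\<close>] that assms(2)] .
  ultimately show ?thesis unfolding cball_in_def by blast
qed

lemma rt_node_subset_rt_class:
  assumes A: "A \<in> rt_nodes X d" and B: "B \<in> rt_nodes X d" "B \<subset> A" "B \<noteq> {}"
  shows "\<exists>C\<in>rt_classes d A. B \<subseteq> C"
proof -
  have AX: "A \<subseteq> X" and BX: "B \<subseteq> X" using rt_nodes_subset A B(1) by blast+
  have "card B < card A" using psubset_card_mono[OF finite_subset_X[OF AX] B(2)] .
  moreover have "0 < card B" using B(3) finite_subset_X[OF BX] by (simp add: card_gt_0_iff)
  ultimately have card_A: "2 \<le> card A" by linarith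
  obtain b where b: "b \<in> B" using B(3) by blast
  obtain a where a: "a \<in> A" "a \<notin> B" using B(2) by blast
  have "diam B d < d a b" using rt_node_separated[OF B(1) b] a AX by blast
  also have "d a b \<le> diam A d" using diam_ge[OF finite_subset_X[OF AX] a(1)] b B(2) by blast
  finally have diam_B: "diam B d < diam A d" .
  obtain C where C: "C \<in> rt_classes d A" "b \<in> C" using ex_rt_class[OF AX card_A] b B(2) by blast
  have "y \<in> C" if "y \<in> B" for y
  proof -
    have "d b y \<le> diam B d" using diam_ge[OF finite_subset_X[OF BX] b that] .
    then show ?thesis using mem_rt_class_iff[OF AX card_A C] diam_B that B(2) by auto
  qed
  then show ?thesis using C by blast
qed

end

locale classU_space = finite_ultrametric +
  assumes nonempty: "X \<noteq> {}" and card_Sp: "card (Sp X d) = card X - 1"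
begin

lemma deficiency_rt_node_le_0: "A \<in> rt_nodes X d \<Longrightarrow> deficiency A \<le> 0"
proof (induction rule: rt_nodes.induct)
  case root
  show ?case using card_Sp nonempty finite_X by (simp add: deficiency_def card_gt_0_iff)
next
  case (child A C)
  then show ?case using deficiency_rt_class_le[OF rt_nodes_subset[OF child.hyps(1)] child.hyps(2,3)]
    by linarith
qed

lemma card_rt_classes_rt_node:
  assumes "A \<in> rt_nodes X d" "2 \<le> card A"
  shows "card (rt_classes d A) = 2"
proof -
  have AX: "A \<subseteq> X" using rt_nodes_subset assms(1) .
  show ?thesis
    using deficiency_split[OF AX assms(2)] card_UN_Sp_rt_classes_le[OF AX assms(2)]
      two_le_card_rt_classes[OF AX assms(2)] sum_deficiency_rt_classes_nonneg[OF AX assms(2)]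
      deficiency_rt_node_le_0[OF assms(1)] by linarith
qed

lemma sum_card_Sp_rt_classes_rt_node:
  assumes "A \<in> rt_nodes X d" "2 \<le> card A"
  shows "(\<Sum>C\<in>rt_classes d A. int (card (Sp C d))) = int (card (\<Union>C\<in>rt_classes d A. Sp C d))"
proof -
  have AX: "A \<subseteq> X" using rt_nodes_subset assms(1) .
  show ?thesis
    using deficiency_split[OF AX assms(2)] card_UN_Sp_rt_classes_le[OF AX assms(2)]
      two_le_card_rt_classes[OF AX assms(2)] sum_deficiency_rt_classes_nonneg[OF AX assms(2)]
      deficiency_rt_node_le_0[OF assms(1)] by linarith
qed

lemma rt_classes_rt_node_eq:
  assumes "A \<in> rt_nodes X d" "2 \<le> card A"
    and "C1 \<in> rt_classes d A" "C2 \<in> rt_classes d A" "C1 \<noteq> C2"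
  shows "rt_classes d A = {C1, C2}"
  using card_subset_eq[OF finite_rt_classes[OF rt_nodes_subset[OF assms(1)] assms(2)], of "{C1, C2}"]
    card_rt_classes_rt_node[OF assms(1,2)] assms(3-5) by simp

lemma Sp_rt_classes_disjoint:
  assumes A: "A \<in> rt_nodes X d" "2 \<le> card A"
    and C: "C1 \<in> rt_classes d A" "C2 \<in> rt_classes d A" "C1 \<noteq> C2"
  shows "Sp C1 d \<inter> Sp C2 d = {}"
proof -
  have AX: "A \<subseteq> X" using rt_nodes_subset A(1) .
  have fin: "finite (Sp C1 d)" "finite (Sp C2 d)"
    using finite_Sp finite_rt_class[OF AX A(2)] C(1,2) by blast+
  have "card (Sp C1 d) + card (Sp C2 d) = card (Sp C1 d \<union> Sp C2 d)"
    using sum_card_Sp_rt_classes_rt_node[OF A] C(3) unfolding rt_classes_rt_node_eq[OF A C] by simp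
  then show ?thesis using card_Un_Int[OF fin] fin by simp
qed

text \<open>A distance below diam A realised from a point of C2 is realised inside C2, and the
  spectra of the siblings C1 and C2 are disjoint.\<close>
lemma diam_notin_Sp_at_rt_sibling:
  assumes A: "A \<in> rt_nodes X d" "2 \<le> card A"
    and C: "C1 \<in> rt_classes d A" "C2 \<in> rt_classes d A" "C1 \<noteq> C2"
    and u: "u \<subseteq> C1" "2 \<le> card u" and t: "t \<in> C2"
  shows "diam u d \<notin> Sp_at X d t"
proof
  assume "diam u d \<in> Sp_at X d t"
  then obtain x where x: "x \<in> X" "x \<noteq> t" "d x t = diam u d" unfolding Sp_at_def by auto
  have AX: "A \<subseteq> X" using rt_nodes_subset A(1) .
  have tA: "t \<in> A" using rt_class_subset[OF AX A(2) C(2)] t by blast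
  have "diam u d \<le> diam C1 d" using diam_mono[OF finite_rt_class[OF AX A(2) C(1)] u(1)] .
  then have diam_u: "diam u d < diam A d" using diam_rt_class_less[OF AX A(2) C(1)] by linarith
  have "x \<in> A"
  proof (rule ccontr)
    assume "x \<notin> A"
    then have "diam A d < d x t" using rt_node_separated[OF A(1) tA] x(1) by blast
    then show False using x(3) diam_u by linarith
  qed
  then have "x \<in> C2"
    using mem_rt_class_iff[OF AX A(2) C(2) t] x diam_u dist_commute[OF _ x(1), of t] tA AX by auto
  then have "d x t \<in> Sp C2 d" using t x(2) unfolding Sp_def by blast
  then have "diam u d \<in> Sp C2 d" using x(3) by simp
  moreover have "diam u d \<in> Sp C1 d"
    using Sp_mono[OF u(1)] diam_in_Sp[OF _ u(2)] u(1) rt_class_subset[OF AX A(2) C(1)] AX by blast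
  ultimately show False using Sp_rt_classes_disjoint[OF A C] by blast
qed

text \<open>Descend from the root along the children containing u: by the previous lemma t lies in
  the same child at every step, so it is still there when the descent reaches u.\<close>
lemma mem_rt_node_if_diam_in_Sp_at:
  assumes u: "u \<in> rt_nodes X d" "2 \<le> card u" and t: "t \<in> X" "diam u d \<in> Sp_at X d t"
  shows "t \<in> u"
proof -
  have "t \<in> u" if "A \<in> rt_nodes X d" "u \<subseteq> A" "t \<in> A" for A
    using that
  proof (induction "card A" arbitrary: A rule: less_induct)
    case less
    show ?case
    proof (cases "A = u")
      case True
      then show ?thesis using less.prems(3) by simp
    next
      case False
      have AX: "A \<subseteq> X" using rt_nodes_subset less.prems(1) .
      have "u \<subset> A" using less.prems(2) False by blast
      then have "card u < card A" using psubset_card_mono[OF finite_subset_X[OF AX]] by blast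
      then have card_A: "2 \<le> card A" using u(2) by linarith
      obtain C1 where C1: "C1 \<in> rt_classes d A" "u \<subseteq> C1"
        using rt_node_subset_rt_class[OF less.prems(1) u(1) \<open>u \<subset> A\<close>] u(2) by fastforce
      obtain C2 where C2: "C2 \<in> rt_classes d A" "t \<in> C2"
        using ex_rt_class[OF AX card_A less.prems(3)] by blast
      have "C1 = C2"
        using diam_notin_Sp_at_rt_sibling[OF less.prems(1) card_A C1(1) C2(1) _ C1(2) u(2) C2(2)] t(2)
        by blast
      then show ?thesis
        using less.hyps[OF card_rt_class_less[OF AX card_A C1(1)]
            rt_nodes.child[OF less.prems(1) card_A C1(1)] C1(2)] C2(2) by blast
    qed
  qed
  from this[OF rt_nodes.root rt_nodes_subset[OF u(1)] t(1)] show ?thesis .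
qed

lemma ball_of_radius_rt_node:
  assumes u: "u \<in> rt_nodes X d" "2 \<le> card u"
  shows "ball_of_radius X d (diam u d) = u"
  unfolding ball_of_radius_def
proof (rule the_equality)
  have uX: "u \<subseteq> X" using rt_nodes_subset u(1) .
  obtain a b where ab: "a \<in> u" "b \<in> u" "a \<noteq> b" "d a b = diam u d"
    by (rule diam_attained_distinct[OF uX u(2)])
  then have "diam u d \<in> Sp_at X d b" using uX unfolding Sp_at_def by force
  then show "\<exists>t\<in>X. diam u d \<in> Sp_at X d t \<and> u = cball_in X d t (diam u d)"
    using cball_rt_node[OF u(1) ab(2)] ab(2) uX by blast
next
  fix B assume "\<exists>t\<in>X. diam u d \<in> Sp_at X d t \<and> B = cball_in X d t (diam u d)"
  then show "B = u" using mem_rt_node_if_diam_in_Sp_at[OF u] cball_rt_node[OF u(1)] by blast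
qed

lemma rt_children_iff_Un:
  assumes u: "u \<in> rt_nodes X d" "2 \<le> card u"
    and v: "v \<in> rt_nodes X d" "v \<noteq> {}" and w: "w \<in> rt_nodes X d" "w \<noteq> {}"
    and "u \<noteq> v" "u \<noteq> w" "v \<noteq> w"
  shows "v \<in> rt_classes d u \<and> w \<in> rt_classes d u \<longleftrightarrow> u = v \<union> w"
proof
  have uX: "u \<subseteq> X" using rt_nodes_subset u(1) .
  assume "v \<in> rt_classes d u \<and> w \<in> rt_classes d u"
  then have "rt_classes d u = {v, w}" using rt_classes_rt_node_eq[OF u] \<open>v \<noteq> w\<close> by blast
  then show "u = v \<union> w" using Union_rt_classes[OF uX u(2)] by simp
next
  have uX: "u \<subseteq> X" using rt_nodes_subset u(1) .
  assume uvw: "u = v \<union> w"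
  then obtain C1 C2 where C1: "C1 \<in> rt_classes d u" "v \<subseteq> C1" and C2: "C2 \<in> rt_classes d u" "w \<subseteq> C2"
    using rt_node_subset_rt_class[OF u(1) v(1) _ v(2)] rt_node_subset_rt_class[OF u(1) w(1) _ w(2)]
      \<open>u \<noteq> v\<close> \<open>u \<noteq> w\<close> by blast
  have "C1 \<noteq> C2"
  proof
    assume "C1 = C2"
    then have "C1 = u" using C1(2) C2(2) uvw rt_class_subset[OF uX u(2) C1(1)] by blast
    then show False using diam_rt_class_less[OF uX u(2) C1(1)] by simp
  qed
  then have "C1 \<inter> C2 = {}" using rt_classes_disjoint[OF uX u(2) C1(1) C2(1)] by blast
  then have "v = C1" "w = C2" using C1 C2 uvw rt_class_subset[OF uX u(2)] by blast+
  then show "v \<in> rt_classes d u \<and> w \<in> rt_classes d u" using C1 C2 by simp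
qed

end
theorem lemma23:
  fixes X :: "'a set" and d :: "'a \<Rightarrow> 'a \<Rightarrow> real" and u v w :: "'a set"
  assumes "classU X d"
    and "rt_internal X d u" and "rt_internal X d v" and "rt_internal X d w"
    and "u \<noteq> v" and "u \<noteq> w" and "v \<noteq> w"
  shows "(rt_child X d u v \<and> rt_child X d u w) \<longleftrightarrow>
         ball_of_radius X d (rt_label d u) =
           ball_of_radius X d (rt_label d v) \<union> ball_of_radius X d (rt_label d w)"
proof -
  interpret classU_space X d
    using assms(1) unfolding classU_def by unfold_locales auto
  have u: "u \<in> rt_nodes X d" "2 \<le> card u" and v: "v \<in> rt_nodes X d" "2 \<le> card v"
    and w: "w \<in> rt_nodes X d" "2 \<le> card w"
    using assms(2-4) unfolding rt_internal_def by auto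
  have "v \<noteq> {}" "w \<noteq> {}" using v(2) w(2) by auto
  then show ?thesis
    unfolding rt_label_def ball_of_radius_rt_node[OF u] ball_of_radius_rt_node[OF v]
      ball_of_radius_rt_node[OF w] rt_child_def
    using rt_children_iff_Un[OF u v(1) _ w(1)] assms(2,5-7) by blast
qed

end
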